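(* Let $\Omega=[a,b)\times[c,d)$ with periodic boundary conditions, $\mathcal{N}_x,\mathcal{N}_y$ positive even integers, $h_x=(b-a)/\mathcal{N}_x$, $h_y=(d-c)/\mathcal{N}_y$, grid points $(x_j,y_k)=(a+jh_x,c+kh_y)$, and grid functions stored as vectors of length $\mathcal{N}_x\mathcal{N}_y$. Let $\mu_x=2\pi/(b-a)$, $\mu_y=2\pi/(d-c)$ and let $\mathbf{D}_2^x$ be the $\mathcal{N}_x\times\mathcal{N}_x$ matrix with $(\mathbf{D}_2^x)_{j,k}=\tfrac12\mu_x^2(-1)^{j+k+1}\csc^2\!\big(\mu_x\tfrac{x_j-x_k}{2}\big)$ for $j\ne k$ and $(\mathbf{D}_2^x)_{j,j}=-\mu_x^2\tfrac{\mathcal{N}_x^2+2}{12}$, and $\mathbf{D}_2^y$ analogously; set $\Delta_h=\mathbf{I}_y\otimes\mathbf{D}_2^x+\mathbf{D}_2^y\otimes\mathbf{I}_x$. Define $\langle u,w\rangle_h=h_xh_y\sum_{j,k}u_{j,k}\bar w_{j,k}$, and let $\cdot$ denote the elementwise product, $|w|^2=w\cdot\bar w$. Let $\varepsilon>0$, $\tau>0$, and let $b_i,a_{ij}$ ($i,j=1,\dots,s$) be real numbers with $b_ia_{ij}+b_ja_{ji}=b_ib_j$ for all $i,j$. Consider the fully discrete scheme: given grid vectors $E^n$ (complex), $N^n,v^n,q^n$ (real), for $i=1,\dots,s$, \[ \begin{aligned} &E_{ni}=E^n+\tau\sum_j a_{ij}k_j^1,\quad k_i^1={\rm i}\big(\Delta_hE_{ni}-\varepsilon^2\Delta_h^2E_{ni}-N_{ni}\cdot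 E_{ni}\big),\\ &N_{ni}=N^n+\tau\sum_j a_{ij}k_j^2,\quad k_i^2=\Delta_hv_{ni},\\ &v_{ni}=v^n+\tau\sum_j a_{ij}k_j^3,\quad k_i^3=N_{ni}-\varepsilon^2\Delta_hN_{ni}+q^n+\tau\sum_j a_{ij}k_j^4,\quad k_i^4=2\,{\rm Re}\big(\bar E_{ni}\cdot k_i^1\big), \end{aligned} \] with update $E^{n+1}=E^n+\tau\sum_ib_ik_i^1$, $N^{n+1}=N^n+\tau\sum_ib_ik_i^2$, $v^{n+1}=v^n+\tau\sum_ib_ik_i^3$, $q^{n+1}=q^n+\tau\sum_ib_ik_i^4$, and initial data $E^0$, $N^0$ the grid values of $E_0,N_0$, $v^0$ the zero-mean solution of $\Delta_hv^0=N_1$ on the grid, and $q^0=|E^0|^2$. Assume the stage equations are solvable at every step. Then for all $n=0,1,\dots,J$: (i) $\langle E^{n+1},E^{n+1}\rangle_h=\langle E^n,E^n\rangle_h$; (ii) $q^n-|E^n|^2=\mathbf{0}$; (iii) $\mathcal{H}_h^{n+1}=\mathcal{H}_h^n$, where \[ \mathcal{H}_h^n=\langle\Delta_hE^n,E^n\rangle_h-\varepsilon^2\langle\Delta_hE^n,\Delta_hE^n\rangle_h-\tfrac12\langle N^n,N^n\rangle_h+\tfrac{\varepsilon^2}{2}\langle\Delta_hN^n,N^n\rangle_h-\langle N^n,|E^n|^2\rangle_h+\tfrac12\langle\Delta_hv^n,v^n\rangle_h. \]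
   Context: This is the Runge–Kutta Fourier pseudo-spectral discretization of the quantum Zakharov system ${\rm i}E_t+\Delta E-\varepsilon^2\Delta^2E=NE$, $N_{tt}-\Delta N+\varepsilon^2\Delta^2N=\Delta|E|^2$, reformulated with $N_t=\Delta v$ and the quadratic auxiliary variable $q=|E|^2$; $\Delta_h$ is the Fourier pseudo-spectral discrete Laplacian. The initial datum $N_1$ satisfies $\int_\Omega N_1=0$. $J$ is the number of time steps. *)

theory Defs
  imports "HOL-Analysis.Analysis"
begin

definition D2 :: "nat \<Rightarrow> real \<Rightarrow> nat \<Rightarrow> nat \<Rightarrow> real" where
  "D2 Nn L j k =
     (let mu = 2 * pi / L; h = L / real Nn in
      if j = k then - (mu ^ 2) * (real Nn ^ 2 + 2) / 12
      else (1/2) * mu ^ 2 * (-1) ^ (j + k + 1)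
             / (sin (mu * ((real j - real k) * h) / 2)) ^ 2)"

text \<open>Grid index set; grid functions are functions on index pairs (j,k).\<close>
definition grid :: "nat \<Rightarrow> nat \<Rightarrow> (nat \<times> nat) set" where
  "grid Nx Ny = {..<Nx} \<times> {..<Ny}"

definition lap :: "real \<Rightarrow> real \<Rightarrow> real \<Rightarrow> real \<Rightarrow> nat \<Rightarrow> nat
      \<Rightarrow> (nat \<times> nat \<Rightarrow> 'f::real_algebra_1) \<Rightarrow> nat \<times> nat \<Rightarrow> 'f" where
  "lap a b c d Nx Ny u p =
     (\<Sum>l<Nx. of_real (D2 Nx (b - a) (fst p) l) * u (l, snd p)) +
     (\<Sum>l<Ny. of_real (D2 Ny (d - c) (snd p) l) * u (fst p, l))"

definition ip :: "real \<Rightarrow> real \<Rightarrow> real \<Rightarrow> real \<Rightarrow> nat \<Rightarrow> nat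
      \<Rightarrow> (nat \<times> nat \<Rightarrow> complex) \<Rightarrow> (nat \<times> nat \<Rightarrow> complex) \<Rightarrow> complex" where
  "ip a b c d Nx Ny u w =
     complex_of_real (((b - a) / real Nx) * ((d - c) / real Ny)) *
     (\<Sum>p\<in>grid Nx Ny. u p * cnj (w p))"

definition cplx :: "(nat \<times> nat \<Rightarrow> real) \<Rightarrow> nat \<times> nat \<Rightarrow> complex" where
  "cplx u = (\<lambda>p. complex_of_real (u p))"

definition Ham :: "real \<Rightarrow> real \<Rightarrow> real \<Rightarrow> real \<Rightarrow> nat \<Rightarrow> nat \<Rightarrow> real
      \<Rightarrow> (nat \<times> nat \<Rightarrow> complex) \<Rightarrow> (nat \<times> nat \<Rightarrow> real) \<Rightarrow> (nat \<times> nat \<Rightarrow> real) \<Rightarrow> complex" where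
  "Ham a b c d Nx Ny \<epsilon> E N v =
     (let L = lap a b c d Nx Ny; IP = ip a b c d Nx Ny in
       IP (L E) E - of_real (\<epsilon>^2) * IP (L E) (L E)
       - (1/2) * IP (cplx N) (cplx N)
       + of_real (\<epsilon>^2 / 2) * IP (L (cplx N)) (cplx N)
       - IP (cplx N) (cplx (\<lambda>p. (cmod (E p))^2))
       + (1/2) * IP (L (cplx v)) (cplx v))"

end

theory Submission
  imports Defs "HOL-Library.Function_Algebras"
begin

text \<open>
  Under the condition b_i a_ij + b_j a_ji = b_i b_j a Runge--Kutta step changes a symmetric
  bilinear form B by B(y',y') - B(y,y) = 2\<tau> \<Sum>_i b_i B(Y_i, k_i), so every quadratic form
  annihilated by the vector field at each stage is conserved exactly.
  Pointwise, B(x,z) = Re(x conj z) shows that |E|^2 increases by 2\<tau> \<Sum>_i b_i Re(E_ni conj k_i^1),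
  which is exactly the increment of q because k^4 = 2 Re(conj E k^1); hence q^n = |E^n|^2.
  Summed over the grid this increment vanishes since \<i>\<Delta>_h is skew-adjoint, which gives
  mass conservation. Replacing |E|^2 by q in H_h turns the energy into a quadratic form of
  (E, N, v, q); its polarisation vanishes at every stage because \<Delta>_h is symmetric, and it
  agrees with H_h because q^n = |E^n|^2.
\<close>

instantiation "fun" :: (type, real_vector) real_vector
begin
definition scaleR_fun :: "real \<Rightarrow> ('a \<Rightarrow> 'b) \<Rightarrow> 'a \<Rightarrow> 'b" where
  "scaleR_fun r f = (\<lambda>x. r *\<^sub>R f x)"
instance by standard (auto simp: scaleR_fun_def fun_eq_iff scaleR_add_right scaleR_add_left)
end

lemma scaleR_fun_apply [simp]: "(r *\<^sub>R f) x = r *\<^sub>R f x"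
  by (simp add: scaleR_fun_def)

lemma sum_fun_apply: "(\<Sum>i\<in>S. f i) x = (\<Sum>i\<in>S. f i x)"
  by (induction S rule: infinite_finite_induct) auto

lemma bilinear_symI:
  assumes add: "\<And>x x' z. B (x + x') z = B x z + B x' z"
    and scale: "\<And>r x z. B (r *\<^sub>R x) z = r *\<^sub>R B x z"
    and sym: "\<And>x z. B x z = B z x"
  shows "bilinear B"
  unfolding bilinear_def
proof (intro conjI allI linearI)
  show "B x (z + z') = B x z + B x z'" "B x (r *\<^sub>R z) = r *\<^sub>R B x z" for x z z' r
    by (metis add sym, metis scale sym)
qed (fact add scale)+

lemma rk_quadratic_increment:
  fixes B :: "'v::real_vector \<Rightarrow> 'v \<Rightarrow> real"
  assumes B: "bilinear B" and B_sym: "\<And>x z. B x z = B z x"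
    and coeffs: "\<And>i j. i \<in> S \<Longrightarrow> j \<in> S \<Longrightarrow> bw i * A i j + bw j * A j i = bw i * bw j"
    and stages: "\<And>i. i \<in> S \<Longrightarrow> Y i = y + \<tau> *\<^sub>R (\<Sum>j\<in>S. A i j *\<^sub>R k j)"
    and update: "y' = y + \<tau> *\<^sub>R (\<Sum>i\<in>S. bw i *\<^sub>R k i)"
  shows "B y' y' - B y y = 2 * \<tau> * (\<Sum>i\<in>S. bw i * B (Y i) (k i))"
proof -
  interpret left: linear "\<lambda>x. B x z" for z using B by (simp add: bilinear_def)
  interpret right: linear "\<lambda>z. B x z" for x using B by (simp add: bilinear_def)
  define K where "K i j = B (k i) (k j)" for i j
  define s where "s = (\<Sum>i\<in>S. bw i *\<^sub>R k i)"
  have "B y' y' = B y y + \<tau> * B y s + \<tau> * B s y + \<tau>\<^sup>2 * B s s"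
    unfolding update s_def[symmetric]
    by (simp add: left.add right.add left.scale right.scale power2_eq_square algebra_simps)
  also have "B s y = B y s" by (rule B_sym)
  also have "B y s = (\<Sum>i\<in>S. bw i * B y (k i))"
    unfolding s_def by (simp add: right.sum right.scale)
  also have "B s s = (\<Sum>i\<in>S. \<Sum>j\<in>S. bw i * bw j * K j i)"
    unfolding s_def K_def by (simp add: left.sum right.sum left.scale right.scale sum_distrib_left mult_ac)
  also have "\<dots> = 2 * (\<Sum>i\<in>S. \<Sum>j\<in>S. bw i * A i j * K j i)"
  proof -
    have K_sym: "K i j = K j i" for i j unfolding K_def by (rule B_sym)
    have "(\<Sum>i\<in>S. \<Sum>j\<in>S. bw i * bw j * K j i)
        = (\<Sum>i\<in>S. \<Sum>j\<in>S. bw i * A i j * K j i) + (\<Sum>i\<in>S. \<Sum>j\<in>S. bw j * A j i * K j i)"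
      by (simp add: distrib_right sum.distrib flip: coeffs cong: sum.cong)
    also have "(\<Sum>i\<in>S. \<Sum>j\<in>S. bw j * A j i * K j i) = (\<Sum>i\<in>S. \<Sum>j\<in>S. bw i * A i j * K j i)"
      by (subst sum.swap) (simp add: K_sym)
    finally show ?thesis by simp
  qed
  finally have increment: "B y' y' - B y y = 2 * \<tau> * (\<Sum>i\<in>S. bw i * B y (k i))
      + 2 * \<tau>\<^sup>2 * (\<Sum>i\<in>S. \<Sum>j\<in>S. bw i * A i j * K j i)"
    by simp
  have "B (Y i) (k i) = B y (k i) + \<tau> * (\<Sum>j\<in>S. A i j * K j i)" if "i \<in> S" for i
    unfolding stages[OF that] K_def by (simp add: left.add left.scale left.sum)
  then have "(\<Sum>i\<in>S. bw i * B (Y i) (k i))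
      = (\<Sum>i\<in>S. bw i * B y (k i)) + \<tau> * (\<Sum>i\<in>S. \<Sum>j\<in>S. bw i * A i j * K j i)"
    by (simp add: distrib_left sum.distrib sum_distrib_left mult_ac cong: sum.cong)
  then show ?thesis
    unfolding increment by (simp add: power2_eq_square distrib_left)
qed

lemma bilinear_inner: "bilinear (inner :: 'a::real_inner \<Rightarrow> 'a \<Rightarrow> real)"
  by (rule bilinear_symI) (auto simp: inner_add_left intro: inner_commute)

lemma inner_complex_eq_Re_mult_cnj: "inner x y = Re (x * cnj y)"
  by (simp add: inner_complex_def)

lemma D2_commute: "D2 n L j k = D2 n L k j"
proof -
  have "real k - real j = - (real j - real k)" by simp
  then have "2 * pi / L * ((real k - real j) * (L / real n)) / 2
      = - (2 * pi / L * ((real j - real k) * (L / real n)) / 2)"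
    by (simp only: mult_minus_left mult_minus_right minus_divide_left)
  then show ?thesis by (simp add: D2_def Let_def add.commute)
qed

lemma sum_symmetric_kernel:
  assumes "\<And>j l. M j l = M l j"
  shows "(\<Sum>j\<in>I. \<Sum>l\<in>I. M j l *\<^sub>R F l j) = (\<Sum>j\<in>I. \<Sum>l\<in>I. M j l *\<^sub>R F j l)"
  by (subst sum.swap) (simp add: assms)

lemma sum_grid: "(\<Sum>p\<in>grid Nx Ny. f p) = (\<Sum>j<Nx. \<Sum>k<Ny. f (j, k))"
  by (simp add: grid_def sum.cartesian_product)

lemma sum_grid_swap: "(\<Sum>p\<in>grid Nx Ny. f p) = (\<Sum>k<Ny. \<Sum>j<Nx. f (j, k))"
  by (simp add: sum_grid sum.swap[of _ "{..<Ny}"])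

lemma lap_adjoint:
  fixes P :: "'f::real_algebra_1 \<Rightarrow> 'f \<Rightarrow> 'g::real_vector"
  assumes P: "bilinear P"
  shows "(\<Sum>p\<in>grid Nx Ny. P (lap a b c d Nx Ny u p) (w p))
       = (\<Sum>p\<in>grid Nx Ny. P (u p) (lap a b c d Nx Ny w p))"
proof -
  interpret left: linear "\<lambda>x. P x z" for z using P by (simp add: bilinear_def)
  interpret right: linear "\<lambda>z. P x z" for x using P by (simp add: bilinear_def)
  let ?Dx = "D2 Nx (b - a)" and ?Dy = "D2 Ny (d - c)"
  have x: "(\<Sum>p\<in>grid Nx Ny. P (\<Sum>l<Nx. of_real (?Dx (fst p) l) * u (l, snd p)) (w p))
         = (\<Sum>p\<in>grid Nx Ny. P (u p) (\<Sum>l<Nx. of_real (?Dx (fst p) l) * w (l, snd p)))"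
    unfolding sum_grid_swap
    by (simp add: left.sum right.sum left.scale right.scale flip: scaleR_conv_of_real)
      (rule sum.cong[OF refl], rule sum_symmetric_kernel[OF D2_commute])
  have y: "(\<Sum>p\<in>grid Nx Ny. P (\<Sum>l<Ny. of_real (?Dy (snd p) l) * u (fst p, l)) (w p))
         = (\<Sum>p\<in>grid Nx Ny. P (u p) (\<Sum>l<Ny. of_real (?Dy (snd p) l) * w (fst p, l)))"
    unfolding sum_grid
    by (simp add: left.sum right.sum left.scale right.scale flip: scaleR_conv_of_real)
      (rule sum.cong[OF refl], rule sum_symmetric_kernel[OF D2_commute])
  show ?thesis
    unfolding lap_def by (simp add: left.add right.add sum.distrib x y)
qed

lemma lap_cplx: "lap a b c d Nx Ny (cplx u) = cplx (lap a b c d Nx Ny u)"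
  by (simp add: lap_def cplx_def fun_eq_iff)

lemma lap_cong:
  assumes "\<And>p. p \<in> grid Nx Ny \<Longrightarrow> u p = u' p" and "p \<in> grid Nx Ny"
  shows "lap a b c d Nx Ny u p = lap a b c d Nx Ny u' p"
  using assms unfolding lap_def grid_def by (cases p) (auto intro!: sum.cong arg_cong2[where f="(+)"])

lemma linear_lap: "linear (lap a b c d Nx Ny :: (nat \<times> nat \<Rightarrow> 'f::real_algebra_1) \<Rightarrow> _)"
  by (rule linearI)
     (simp_all add: lap_def fun_eq_iff distrib_left sum.distrib scaleR_add_right scaleR_sum_right
       flip: scaleR_conv_of_real)

lemma bilinear_mult_cnj: "bilinear (\<lambda>x y :: complex. x * cnj y)"
  by (auto simp: bilinear_def algebra_simps scaleR_conv_of_real intro!: linearI)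

lemma sum_lap_mult_cnj:
  "(\<Sum>p\<in>grid Nx Ny. lap a b c d Nx Ny u p * cnj (w p))
     = (\<Sum>p\<in>grid Nx Ny. u p * cnj (lap a b c d Nx Ny w p))"
  using lap_adjoint[OF bilinear_mult_cnj] .

lemma Im_sum_lap_mult_cnj: "Im (\<Sum>p\<in>grid Nx Ny. lap a b c d Nx Ny u p * cnj (u p)) = 0"
proof -
  let ?z = "\<Sum>p\<in>grid Nx Ny. lap a b c d Nx Ny u p * cnj (u p)"
  have "?z = (\<Sum>p\<in>grid Nx Ny. u p * cnj (lap a b c d Nx Ny u p))"
    by (rule sum_lap_mult_cnj)
  also have "\<dots> = cnj ?z"
    unfolding cnj_sum complex_cnj_mult complex_cnj_cnj by (rule sum.cong[OF refl mult.commute])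
  finally have "Im ?z = Im (cnj ?z)" by (rule arg_cong)
  then show ?thesis unfolding cnj.sel by linarith
qed

definition grid_inner :: "nat \<Rightarrow> nat \<Rightarrow> (nat \<times> nat \<Rightarrow> 'a::real_inner) \<Rightarrow> (nat \<times> nat \<Rightarrow> 'a) \<Rightarrow> real" where
  "grid_inner Nx Ny u w = (\<Sum>p\<in>grid Nx Ny. inner (u p) (w p))"

lemma grid_inner_commute: "grid_inner Nx Ny u w = grid_inner Nx Ny w u"
  by (simp add: grid_inner_def inner_commute)

lemma bilinear_grid_inner: "bilinear (grid_inner Nx Ny)"
  by (rule bilinear_symI[OF _ _ grid_inner_commute])
     (simp_all add: grid_inner_def inner_add_left sum.distrib sum_distrib_left)

lemma grid_inner_lap:
  fixes u w :: "nat \<times> nat \<Rightarrow> 'a::{real_inner, real_algebra_1}"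
  shows "grid_inner Nx Ny (lap a b c d Nx Ny u) w = grid_inner Nx Ny u (lap a b c d Nx Ny w)"
  unfolding grid_inner_def by (rule lap_adjoint[OF bilinear_inner])

lemma grid_inner_cong:
  assumes "\<And>p. p \<in> grid Nx Ny =simp=> u p = u' p" and "\<And>p. p \<in> grid Nx Ny =simp=> w p = w' p"
  shows "grid_inner Nx Ny u w = grid_inner Nx Ny u' w'"
  using assms by (simp add: grid_inner_def simp_implies_def)

lemma grid_inner_cplx: "grid_inner Nx Ny (cplx u) (cplx w) = grid_inner Nx Ny u w"
  by (simp add: grid_inner_def cplx_def inner_complex_def)

lemma ip_eq_grid_inner:
  assumes "Im (\<Sum>p\<in>grid Nx Ny. u p * cnj (w p)) = 0"
  shows "ip a b c d Nx Ny u w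
       = of_real ((b - a) / real Nx * ((d - c) / real Ny) * grid_inner Nx Ny u w)"
proof -
  have "(\<Sum>p\<in>grid Nx Ny. u p * cnj (w p)) = of_real (grid_inner Nx Ny u w)"
    using assms by (simp add: complex_eq_iff grid_inner_def inner_complex_eq_Re_mult_cnj)
  then show ?thesis by (simp add: ip_def)
qed

lemma ip_cplx:
  "ip a b c d Nx Ny (cplx u) (cplx w)
     = of_real ((b - a) / real Nx * ((d - c) / real Ny) * grid_inner Nx Ny u w)"
proof -
  have "Im (\<Sum>p\<in>grid Nx Ny. cplx u p * cnj (cplx w p)) = 0" by (simp add: cplx_def)
  then show ?thesis by (simp add: ip_eq_grid_inner grid_inner_cplx)
qed

lemma sum_inner_schroedinger_rhs:
  fixes X K :: "nat \<times> nat \<Rightarrow> complex" and M :: "nat \<times> nat \<Rightarrow> real"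
  assumes K: "\<And>p. p \<in> grid Nx Ny \<Longrightarrow> K p = \<i> * (lap a b c d Nx Ny X p
      - of_real (\<epsilon>^2) * lap a b c d Nx Ny (lap a b c d Nx Ny X) p - of_real (M p) * X p)"
  shows "(\<Sum>p\<in>grid Nx Ny. inner (X p) (K p)) = 0"
proof -
  let ?G = "grid Nx Ny" and ?L = "lap a b c d Nx Ny"
  have "(\<Sum>p\<in>?G. inner (X p) (K p))
      = (\<Sum>p\<in>?G. Im (X p * cnj (?L X p)) - \<epsilon>^2 * Im (X p * cnj (?L (?L X) p)))"
    by (intro sum.cong refl) (simp add: K inner_complex_def algebra_simps)
  also have "\<dots> = Im (\<Sum>p\<in>?G. X p * cnj (?L X p)) - \<epsilon>^2 * Im (\<Sum>p\<in>?G. X p * cnj (?L (?L X) p))"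
    by (simp only: sum_subtractf sum_distrib_left Im_sum)
  also have "(\<Sum>p\<in>?G. X p * cnj (?L X p)) = (\<Sum>p\<in>?G. ?L X p * cnj (X p))"
    by (rule sum_lap_mult_cnj[symmetric])
  also have "(\<Sum>p\<in>?G. X p * cnj (?L (?L X) p)) = (\<Sum>p\<in>?G. ?L X p * cnj (?L X p))"
    by (rule sum_lap_mult_cnj[symmetric])
  finally show ?thesis unfolding Im_sum_lap_mult_cnj by simp
qed

type_synonym zakharov_state =
  "(nat \<times> nat \<Rightarrow> complex) \<times> (nat \<times> nat \<Rightarrow> real) \<times> (nat \<times> nat \<Rightarrow> real) \<times> (nat \<times> nat \<Rightarrow> real)"

text \<open>The polarisation of H_h with |E|^2 replaced by q, divided by h_x h_y.\<close>

fun energy_form :: "real \<Rightarrow> real \<Rightarrow> real \<Rightarrow> real \<Rightarrow> nat \<Rightarrow> nat \<Rightarrow> real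
      \<Rightarrow> zakharov_state \<Rightarrow> zakharov_state \<Rightarrow> real" where
  "energy_form a b c d Nx Ny \<epsilon> (E1, N1, v1, q1) (E2, N2, v2, q2) =
     grid_inner Nx Ny (lap a b c d Nx Ny E1) E2
     - \<epsilon>^2 * grid_inner Nx Ny (lap a b c d Nx Ny E1) (lap a b c d Nx Ny E2)
     - 1/2 * grid_inner Nx Ny N1 N2
     + \<epsilon>^2/2 * grid_inner Nx Ny (lap a b c d Nx Ny N1) N2
     - 1/2 * (grid_inner Nx Ny N1 q2 + grid_inner Nx Ny N2 q1)
     + 1/2 * grid_inner Nx Ny (lap a b c d Nx Ny v1) v2"

lemma grid_inner_lap_commute:
  fixes u w :: "nat \<times> nat \<Rightarrow> 'a::{real_inner, real_algebra_1}"
  shows "grid_inner Nx Ny (lap a b c d Nx Ny u) w = grid_inner Nx Ny (lap a b c d Nx Ny w) u"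
  using grid_inner_lap grid_inner_commute by metis

lemma energy_form_commute: "energy_form a b c d Nx Ny \<epsilon> x z = energy_form a b c d Nx Ny \<epsilon> z x"
proof -
  obtain E1 N1 v1 q1 where x: "x = (E1, N1, v1, q1)" by (cases x) auto
  obtain E2 N2 v2 q2 where z: "z = (E2, N2, v2, q2)" by (cases z) auto
  let ?G = "grid_inner Nx Ny" and ?L = "lap a b c d Nx Ny"
  have "?G (?L E1) E2 = ?G (?L E2) E1" "?G (?L N1) N2 = ?G (?L N2) N1" "?G (?L v1) v2 = ?G (?L v2) v1"
    by (rule grid_inner_lap_commute)+
  moreover have "?G (?L E1) (?L E2) = ?G (?L E2) (?L E1)" "?G N1 N2 = ?G N2 N1"
    by (rule grid_inner_commute)+
  ultimately show ?thesis unfolding x z by simp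
qed

lemma bilinear_energy_form: "bilinear (energy_form a b c d Nx Ny \<epsilon>)"
proof (rule bilinear_symI[OF _ _ energy_form_commute])
  note G = bilinear_ladd[OF bilinear_grid_inner] bilinear_radd[OF bilinear_grid_inner]
    bilinear_lmul[OF bilinear_grid_inner] bilinear_rmul[OF bilinear_grid_inner]
  note L = linear_add[OF linear_lap] linear_scale[OF linear_lap]
  show "energy_form a b c d Nx Ny \<epsilon> (x + x') z
      = energy_form a b c d Nx Ny \<epsilon> x z + energy_form a b c d Nx Ny \<epsilon> x' z" for x x' z
    by (cases x; cases x'; cases z) (simp add: G L algebra_simps)
  show "energy_form a b c d Nx Ny \<epsilon> (r *\<^sub>R x) z = r *\<^sub>R energy_form a b c d Nx Ny \<epsilon> x z" for r x z
    by (cases x; cases z) (simp add: G L algebra_simps)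
qed

lemma energy_form_stage_eq_0:
  fixes X K1 :: "nat \<times> nat \<Rightarrow> complex" and M V Q K2 K3 K4 :: "nat \<times> nat \<Rightarrow> real"
  assumes K1: "\<And>p. p \<in> grid Nx Ny \<Longrightarrow> K1 p = \<i> * (lap a b c d Nx Ny X p
      - of_real (\<epsilon>^2) * lap a b c d Nx Ny (lap a b c d Nx Ny X) p - of_real (M p) * X p)"
    and K2: "\<And>p. p \<in> grid Nx Ny \<Longrightarrow> K2 p = lap a b c d Nx Ny V p"
    and K3: "\<And>p. p \<in> grid Nx Ny \<Longrightarrow> K3 p = M p - \<epsilon>^2 * lap a b c d Nx Ny M p + Q p"
    and K4: "\<And>p. p \<in> grid Nx Ny \<Longrightarrow> K4 p = 2 * Re (cnj (X p) * K1 p)"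
  shows "energy_form a b c d Nx Ny \<epsilon> (X, M, V, Q) (K1, K2, K3, K4) = 0"
proof -
  let ?G = "grid Nx Ny" and ?L = "lap a b c d Nx Ny"
  have "grid_inner Nx Ny (?L X) (?L K1) = grid_inner Nx Ny (?L (?L X)) K1"
    by (rule grid_inner_lap[symmetric])
  then have "energy_form a b c d Nx Ny \<epsilon> (X, M, V, Q) (K1, K2, K3, K4)
     = (\<Sum>p\<in>?G. inner (?L X p) (K1 p) - \<epsilon>^2 * inner (?L (?L X) p) (K1 p)
          - 1/2 * (M p * K2 p) + \<epsilon>^2/2 * (?L M p * K2 p)
          - 1/2 * (M p * K4 p + K2 p * Q p) + 1/2 * (?L V p * K3 p))"
    by (simp add: grid_inner_def inner_real_def sum.distrib sum_subtractf sum_distrib_left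
        flip: sum_divide_distrib)
  also have "\<dots> = 0"
    by (intro sum.neutral ballI) (simp add: K1 K2 K3 K4 inner_complex_def algebra_simps)
  finally show ?thesis .
qed

lemma Ham_eq_energy_form:
  assumes q: "\<And>p. p \<in> grid Nx Ny \<Longrightarrow> q p = (cmod (E p))^2"
  shows "Ham a b c d Nx Ny \<epsilon> E N v = of_real ((b - a) / real Nx * ((d - c) / real Ny)
           * energy_form a b c d Nx Ny \<epsilon> (E, N, v, q) (E, N, v, q))"
proof -
  let ?L = "lap a b c d Nx Ny"
  define h where "h = (b - a) / real Nx * ((d - c) / real Ny)"
  have "ip a b c d Nx Ny (?L E) E = of_real (h * grid_inner Nx Ny (?L E) E)"
    unfolding h_def by (rule ip_eq_grid_inner[OF Im_sum_lap_mult_cnj])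
  moreover have "ip a b c d Nx Ny (?L E) (?L E) = of_real (h * grid_inner Nx Ny (?L E) (?L E))"
    unfolding h_def by (rule ip_eq_grid_inner) simp
  moreover have "grid_inner Nx Ny N (\<lambda>p. (cmod (E p))^2) = grid_inner Nx Ny N q"
    by (rule grid_inner_cong) (simp_all add: q)
  ultimately show ?thesis
    unfolding h_def[symmetric] Ham_def Let_def lap_cplx ip_cplx energy_form.simps
    by (simp add: algebra_simps)
qed

text \<open>The scheme only constrains grid values. Extending by zero turns the stage relations into
  identities of functions, to which \<open>rk_quadratic_increment\<close> applies.\<close>

definition on_grid :: "nat \<Rightarrow> nat \<Rightarrow> (nat \<times> nat \<Rightarrow> 'a::zero) \<Rightarrow> nat \<times> nat \<Rightarrow> 'a" where
  "on_grid Nx Ny u = (\<lambda>p. if p \<in> grid Nx Ny then u p else 0)"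

lemma on_grid_apply: "p \<in> grid Nx Ny \<Longrightarrow> on_grid Nx Ny u p = u p"
  by (simp add: on_grid_def)

lemma lap_on_grid: "p \<in> grid Nx Ny \<Longrightarrow> lap a b c d Nx Ny (on_grid Nx Ny u) p = lap a b c d Nx Ny u p"
  by (rule lap_cong) (simp_all add: on_grid_apply)

lemma on_grid_rk_comb:
  fixes U X :: "nat \<times> nat \<Rightarrow> 'a::real_vector"
  assumes "\<And>p. p \<in> grid Nx Ny \<Longrightarrow> U p = X p + r *\<^sub>R (\<Sum>j\<in>S. c j *\<^sub>R F j p)"
  shows "on_grid Nx Ny U = on_grid Nx Ny X + r *\<^sub>R (\<Sum>j\<in>S. c j *\<^sub>R on_grid Nx Ny (F j))"
  by (rule ext) (simp add: on_grid_def assms sum_fun_apply)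

definition grid_state :: "nat \<Rightarrow> nat \<Rightarrow> (nat \<times> nat \<Rightarrow> complex) \<Rightarrow> (nat \<times> nat \<Rightarrow> real)
      \<Rightarrow> (nat \<times> nat \<Rightarrow> real) \<Rightarrow> (nat \<times> nat \<Rightarrow> real) \<Rightarrow> zakharov_state" where
  "grid_state Nx Ny E N v q = (on_grid Nx Ny E, on_grid Nx Ny N, on_grid Nx Ny v, on_grid Nx Ny q)"

lemma energy_form_grid_state:
  "energy_form a b c d Nx Ny \<epsilon> (grid_state Nx Ny E1 N1 v1 q1) (grid_state Nx Ny E2 N2 v2 q2)
     = energy_form a b c d Nx Ny \<epsilon> (E1, N1, v1, q1) (E2, N2, v2, q2)"
  by (simp add: grid_state_def on_grid_apply lap_on_grid cong: grid_inner_cong)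

lemma grid_state_rk_comb:
  assumes "\<And>p. p \<in> grid Nx Ny \<Longrightarrow> E' p = E p + of_real r * (\<Sum>j\<in>S. of_real (c j) * KE j p)"
    and "\<And>p. p \<in> grid Nx Ny \<Longrightarrow> N' p = N p + r * (\<Sum>j\<in>S. c j * KN j p)"
    and "\<And>p. p \<in> grid Nx Ny \<Longrightarrow> v' p = v p + r * (\<Sum>j\<in>S. c j * Kv j p)"
    and "\<And>p. p \<in> grid Nx Ny \<Longrightarrow> q' p = q p + r * (\<Sum>j\<in>S. c j * Kq j p)"
  shows "grid_state Nx Ny E' N' v' q'
       = grid_state Nx Ny E N v q + r *\<^sub>R (\<Sum>j\<in>S. c j *\<^sub>R grid_state Nx Ny (KE j) (KN j) (Kv j) (Kq j))"
  unfolding grid_state_def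
  by (simp add: prod_eq_iff fst_sum snd_sum; intro conjI on_grid_rk_comb)
     (simp_all add: assms scaleR_conv_of_real)

locale zakharov_rk_step =
  fixes a b c d \<epsilon> \<tau> :: real and Nx Ny :: nat and S :: "nat set"
    and A :: "nat \<Rightarrow> nat \<Rightarrow> real" and bw :: "nat \<Rightarrow> real"
    and E E' :: "nat \<times> nat \<Rightarrow> complex" and N N' v v' q q' :: "nat \<times> nat \<Rightarrow> real"
    and Es K1 :: "nat \<Rightarrow> nat \<times> nat \<Rightarrow> complex" and Ns Vs K2 K3 K4 :: "nat \<Rightarrow> nat \<times> nat \<Rightarrow> real"
  assumes coeffs: "\<And>i j. i \<in> S \<Longrightarrow> j \<in> S \<Longrightarrow> bw i * A i j + bw j * A j i = bw i * bw j"
    and stage_E: "\<And>i p. i \<in> S \<Longrightarrow> p \<in> grid Nx Ny \<Longrightarrow>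
        Es i p = E p + of_real \<tau> * (\<Sum>j\<in>S. of_real (A i j) * K1 j p)"
    and slope_E: "\<And>i p. i \<in> S \<Longrightarrow> p \<in> grid Nx Ny \<Longrightarrow>
        K1 i p = \<i> * (lap a b c d Nx Ny (Es i) p
                       - of_real (\<epsilon>^2) * lap a b c d Nx Ny (lap a b c d Nx Ny (Es i)) p
                       - of_real (Ns i p) * Es i p)"
    and stage_N: "\<And>i p. i \<in> S \<Longrightarrow> p \<in> grid Nx Ny \<Longrightarrow>
        Ns i p = N p + \<tau> * (\<Sum>j\<in>S. A i j * K2 j p)"
    and slope_N: "\<And>i p. i \<in> S \<Longrightarrow> p \<in> grid Nx Ny \<Longrightarrow> K2 i p = lap a b c d Nx Ny (Vs i) p"
    and stage_v: "\<And>i p. i \<in> S \<Longrightarrow> p \<in> grid Nx Ny \<Longrightarrow>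
        Vs i p = v p + \<tau> * (\<Sum>j\<in>S. A i j * K3 j p)"
    and slope_v: "\<And>i p. i \<in> S \<Longrightarrow> p \<in> grid Nx Ny \<Longrightarrow>
        K3 i p = Ns i p - \<epsilon>^2 * lap a b c d Nx Ny (Ns i) p + q p + \<tau> * (\<Sum>j\<in>S. A i j * K4 j p)"
    and slope_q: "\<And>i p. i \<in> S \<Longrightarrow> p \<in> grid Nx Ny \<Longrightarrow> K4 i p = 2 * Re (cnj (Es i p) * K1 i p)"
    and update_E: "\<And>p. p \<in> grid Nx Ny \<Longrightarrow> E' p = E p + of_real \<tau> * (\<Sum>i\<in>S. of_real (bw i) * K1 i p)"
    and update_N: "\<And>p. p \<in> grid Nx Ny \<Longrightarrow> N' p = N p + \<tau> * (\<Sum>i\<in>S. bw i * K2 i p)"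
    and update_v: "\<And>p. p \<in> grid Nx Ny \<Longrightarrow> v' p = v p + \<tau> * (\<Sum>i\<in>S. bw i * K3 i p)"
    and update_q: "\<And>p. p \<in> grid Nx Ny \<Longrightarrow> q' p = q p + \<tau> * (\<Sum>i\<in>S. bw i * K4 i p)"
begin

lemma modulus_increment:
  assumes p: "p \<in> grid Nx Ny"
  shows "(cmod (E' p))^2 - (cmod (E p))^2 = 2 * \<tau> * (\<Sum>i\<in>S. bw i * inner (Es i p) (K1 i p))"
  unfolding power2_norm_eq_inner
proof (rule rk_quadratic_increment[OF bilinear_inner inner_commute coeffs])
  show "Es i p = E p + \<tau> *\<^sub>R (\<Sum>j\<in>S. A i j *\<^sub>R K1 j p)" if "i \<in> S" for i
    using stage_E[OF that p] by (simp add: scaleR_conv_of_real)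
  show "E' p = E p + \<tau> *\<^sub>R (\<Sum>i\<in>S. bw i *\<^sub>R K1 i p)"
    using update_E[OF p] by (simp add: scaleR_conv_of_real)
qed

lemma q_tracks_modulus:
  assumes p: "p \<in> grid Nx Ny" and q: "q p = (cmod (E p))^2"
  shows "q' p = (cmod (E' p))^2"
proof -
  have "(\<Sum>i\<in>S. bw i * K4 i p) = 2 * (\<Sum>i\<in>S. bw i * inner (Es i p) (K1 i p))"
    unfolding sum_distrib_left by (intro sum.cong refl) (simp add: slope_q p inner_complex_def)
  then show ?thesis
    using update_q[OF p] modulus_increment[OF p] q by simp
qed

lemma mass_conserved: "ip a b c d Nx Ny E' E' = ip a b c d Nx Ny E E"
proof -
  have "grid_inner Nx Ny E' E' - grid_inner Nx Ny E E
      = (\<Sum>p\<in>grid Nx Ny. 2 * \<tau> * (\<Sum>i\<in>S. bw i * inner (Es i p) (K1 i p)))"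
    unfolding grid_inner_def by (simp add: modulus_increment sum_subtractf[symmetric]
        flip: power2_norm_eq_inner cong: sum.cong)
  also have "\<dots> = 2 * \<tau> * (\<Sum>i\<in>S. bw i * (\<Sum>p\<in>grid Nx Ny. inner (Es i p) (K1 i p)))"
    by (simp add: sum_distrib_left sum.swap[of _ "grid Nx Ny"] mult_ac)
  also have "\<dots> = 0"
    by (simp add: sum_inner_schroedinger_rhs[OF slope_E])
  finally show ?thesis
    by (simp add: ip_eq_grid_inner)
qed

definition stage_q :: "nat \<Rightarrow> nat \<times> nat \<Rightarrow> real" where
  "stage_q i p = q p + \<tau> * (\<Sum>j\<in>S. A i j * K4 j p)"

lemma energy_form_conserved:
  "energy_form a b c d Nx Ny \<epsilon> (E', N', v', q') (E', N', v', q')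
     = energy_form a b c d Nx Ny \<epsilon> (E, N, v, q) (E, N, v, q)"
proof -
  let ?B = "energy_form a b c d Nx Ny \<epsilon>" and ?st = "grid_state Nx Ny"
  have "?B (?st E' N' v' q') (?st E' N' v' q') - ?B (?st E N v q) (?st E N v q)
      = 2 * \<tau> * (\<Sum>i\<in>S. bw i
          * ?B (?st (Es i) (Ns i) (Vs i) (stage_q i)) (?st (K1 i) (K2 i) (K3 i) (K4 i)))"
  proof (rule rk_quadratic_increment[OF bilinear_energy_form energy_form_commute coeffs])
    show "?st (Es i) (Ns i) (Vs i) (stage_q i)
        = ?st E N v q + \<tau> *\<^sub>R (\<Sum>j\<in>S. A i j *\<^sub>R ?st (K1 j) (K2 j) (K3 j) (K4 j))" if "i \<in> S" for i
      by (rule grid_state_rk_comb) (simp_all add: stage_E stage_N stage_v stage_q_def that)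
    show "?st E' N' v' q' = ?st E N v q + \<tau> *\<^sub>R (\<Sum>i\<in>S. bw i *\<^sub>R ?st (K1 i) (K2 i) (K3 i) (K4 i))"
      by (rule grid_state_rk_comb) (simp_all add: update_E update_N update_v update_q)
  qed
  moreover have "?B (?st (Es i) (Ns i) (Vs i) (stage_q i)) (?st (K1 i) (K2 i) (K3 i) (K4 i)) = 0"
    if "i \<in> S" for i
    unfolding energy_form_grid_state
    by (rule energy_form_stage_eq_0) (simp_all add: slope_E slope_N slope_v slope_q stage_q_def that)
  ultimately show ?thesis
    by (simp add: energy_form_grid_state)
qed

lemma energy_conserved:
  assumes q: "\<And>p. p \<in> grid Nx Ny \<Longrightarrow> q p = (cmod (E p))^2"
  shows "Ham a b c d Nx Ny \<epsilon> E' N' v' = Ham a b c d Nx Ny \<epsilon> E N v"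
proof -
  have q': "q' p = (cmod (E' p))^2" if "p \<in> grid Nx Ny" for p
    using q_tracks_modulus[OF that q[OF that]] .
  show ?thesis
    by (simp only: Ham_eq_energy_form[OF q] Ham_eq_energy_form[OF q'] energy_form_conserved)
qed

end

theorem theorem3p3:
  fixes a b c d \<epsilon> \<tau> :: real
    and Nx Ny s J :: nat
    and A :: "nat \<Rightarrow> nat \<Rightarrow> real" and bw :: "nat \<Rightarrow> real"
    and E0 :: "real \<times> real \<Rightarrow> complex" and N0 N1 :: "real \<times> real \<Rightarrow> real"
    and E :: "nat \<Rightarrow> nat \<times> nat \<Rightarrow> complex"
    and N v q :: "nat \<Rightarrow> nat \<times> nat \<Rightarrow> real"
    and Es K1 :: "nat \<Rightarrow> nat \<Rightarrow> nat \<times> nat \<Rightarrow> complex"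
    and Ns Vs K2 K3 K4 :: "nat \<Rightarrow> nat \<Rightarrow> nat \<times> nat \<Rightarrow> real"
  assumes ab: "a < b" and cd: "c < d"
    and Nx: "Nx > 0" "even Nx" and Ny: "Ny > 0" "even Ny"
    and eps: "\<epsilon> > 0" and tau: "\<tau> > 0"
    and symp: "\<And>i j. i \<in> {1..s} \<Longrightarrow> j \<in> {1..s} \<Longrightarrow>
                 bw i * A i j + bw j * A j i = bw i * bw j"
    and N1_mean: "integral (cbox (a, c) (b, d)) N1 = 0"
    and init_E: "\<And>j k. j < Nx \<Longrightarrow> k < Ny \<Longrightarrow>
                   E 0 (j, k) = E0 (a + real j * ((b - a) / real Nx), c + real k * ((d - c) / real Ny))"
    and init_N: "\<And>j k. j < Nx \<Longrightarrow> k < Ny \<Longrightarrow>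
                   N 0 (j, k) = N0 (a + real j * ((b - a) / real Nx), c + real k * ((d - c) / real Ny))"
    and init_v: "\<And>j k. j < Nx \<Longrightarrow> k < Ny \<Longrightarrow>
                   lap a b c d Nx Ny (v 0) (j, k) = N1 (a + real j * ((b - a) / real Nx), c + real k * ((d - c) / real Ny))"
    and init_v_mean: "(\<Sum>p\<in>grid Nx Ny. v 0 p) = 0"
    and init_q: "\<And>p. p \<in> grid Nx Ny \<Longrightarrow> q 0 p = (cmod (E 0 p))^2"
    and stE: "\<And>n i p. n \<le> J \<Longrightarrow> i \<in> {1..s} \<Longrightarrow> p \<in> grid Nx Ny \<Longrightarrow>
        Es n i p = E n p + of_real \<tau> * (\<Sum>j\<in>{1..s}. of_real (A i j) * K1 n j p)"
    and stK1: "\<And>n i p. n \<le> J \<Longrightarrow> i \<in> {1..s} \<Longrightarrow> p \<in> grid Nx Ny \<Longrightarrow>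
        K1 n i p = \<i> * (lap a b c d Nx Ny (Es n i) p
                         - of_real (\<epsilon>^2) * lap a b c d Nx Ny (lap a b c d Nx Ny (Es n i)) p
                         - of_real (Ns n i p) * Es n i p)"
    and stN: "\<And>n i p. n \<le> J \<Longrightarrow> i \<in> {1..s} \<Longrightarrow> p \<in> grid Nx Ny \<Longrightarrow>
        Ns n i p = N n p + \<tau> * (\<Sum>j\<in>{1..s}. A i j * K2 n j p)"
    and stK2: "\<And>n i p. n \<le> J \<Longrightarrow> i \<in> {1..s} \<Longrightarrow> p \<in> grid Nx Ny \<Longrightarrow>
        K2 n i p = lap a b c d Nx Ny (Vs n i) p"
    and stV: "\<And>n i p. n \<le> J \<Longrightarrow> i \<in> {1..s} \<Longrightarrow> p \<in> grid Nx Ny \<Longrightarrow>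
        Vs n i p = v n p + \<tau> * (\<Sum>j\<in>{1..s}. A i j * K3 n j p)"
    and stK3: "\<And>n i p. n \<le> J \<Longrightarrow> i \<in> {1..s} \<Longrightarrow> p \<in> grid Nx Ny \<Longrightarrow>
        K3 n i p = Ns n i p - \<epsilon>^2 * lap a b c d Nx Ny (Ns n i) p + q n p
                   + \<tau> * (\<Sum>j\<in>{1..s}. A i j * K4 n j p)"
    and stK4: "\<And>n i p. n \<le> J \<Longrightarrow> i \<in> {1..s} \<Longrightarrow> p \<in> grid Nx Ny \<Longrightarrow>
        K4 n i p = 2 * Re (cnj (Es n i p) * K1 n i p)"
    and updE: "\<And>n p. n \<le> J \<Longrightarrow> p \<in> grid Nx Ny \<Longrightarrow>
        E (Suc n) p = E n p + of_real \<tau> * (\<Sum>i\<in>{1..s}. of_real (bw i) * K1 n i p)"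
    and updN: "\<And>n p. n \<le> J \<Longrightarrow> p \<in> grid Nx Ny \<Longrightarrow>
        N (Suc n) p = N n p + \<tau> * (\<Sum>i\<in>{1..s}. bw i * K2 n i p)"
    and updV: "\<And>n p. n \<le> J \<Longrightarrow> p \<in> grid Nx Ny \<Longrightarrow>
        v (Suc n) p = v n p + \<tau> * (\<Sum>i\<in>{1..s}. bw i * K3 n i p)"
    and updQ: "\<And>n p. n \<le> J \<Longrightarrow> p \<in> grid Nx Ny \<Longrightarrow>
        q (Suc n) p = q n p + \<tau> * (\<Sum>i\<in>{1..s}. bw i * K4 n i p)"
  shows "\<forall>n \<le> J.
           ip a b c d Nx Ny (E (Suc n)) (E (Suc n)) = ip a b c d Nx Ny (E n) (E n)
         \<and> (\<forall>p\<in>grid Nx Ny. q n p - (cmod (E n p))^2 = 0)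
         \<and> Ham a b c d Nx Ny \<epsilon> (E (Suc n)) (N (Suc n)) (v (Suc n))
             = Ham a b c d Nx Ny \<epsilon> (E n) (N n) (v n)"
proof -
  \<comment> \<open>The conservation laws are algebraic: besides the scheme only \<open>symp\<close> and \<open>init_q\<close> are used.\<close>
  have step: "zakharov_rk_step a b c d \<epsilon> \<tau> Nx Ny {1..s} A bw (E n) (E (Suc n)) (N n) (N (Suc n))
      (v n) (v (Suc n)) (q n) (q (Suc n)) (Es n) (K1 n) (Ns n) (Vs n) (K2 n) (K3 n) (K4 n)"
    if "n \<le> J" for n
    by (unfold_locales; fact symp stE[OF that] stK1[OF that] stN[OF that] stK2[OF that]
        stV[OF that] stK3[OF that] stK4[OF that] updE[OF that] updN[OF that] updV[OF that] updQ[OF that])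
  have q_eq_modulus: "\<forall>p\<in>grid Nx Ny. q n p = (cmod (E n p))^2" if "n \<le> Suc J" for n
    using that
  proof (induction n)
    case 0
    then show ?case using init_q by blast
  next
    case (Suc n)
    then show ?case using zakharov_rk_step.q_tracks_modulus[OF step] by simp
  qed
  show ?thesis
    using q_eq_modulus zakharov_rk_step.mass_conserved[OF step] zakharov_rk_step.energy_conserved[OF step]
    by simp
qed

end
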